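(* For every $\delta$-algebra $A$, the homomorphism $\eta_A\colon A\to C(\mathrm{Max}\,A,[0,1])$, $a\mapsto\hat a$, is an epimorphism in the category $\Delta$ of $\delta$-algebras and $\delta$-homomorphisms.
   Context: An MV-algebra is an algebra $(A,\oplus,\neg,0)$ of type $(2,1,0)$ such that $(A,\oplus,0)$ is a commutative monoid, $\neg\neg a=a$, $a\oplus\neg 0=\neg 0$, and $\neg(\neg a\oplus b)\oplus b=\neg(\neg b\oplus a)\oplus a$. Derived operations: $1:=\neg 0$, $a\odot b:=\neg(\neg a\oplus\neg b)$, $a\ominus b:=a\odot\neg b$, $a\vee b:=\neg(\neg a\oplus b)\oplus b$ (join of a lattice order $\le$), $d(a,b):=(a\ominus b)\oplus(b\ominus a)$. Let $\mathcal{L}=\{\delta,\oplus,\neg,0\}$ of type $(\omega,2,1,0)$; $\tfrac12(x):=\delta(x,0,0,\dots)$. A $\delta$-algebra is an $\mathcal{L}$-algebra whose MV-reduct is an MV-algebra and satisfying for all $x,y,\vec x,\vec y$: (i) $d(\delta(\vec x),\delta(x_1,0,0,\dots))=\delta(0,x_2,x_3,\dots)$; (ii) $\tfrac12(\delta(\vec x))=\delta(\tfrac12(x_1),\tfrac12(x_2),\dots)$; (iii) $\delta(x,x,\dots)=x$; (iv) $\delta(0,\vec x)=\tfrac12(\delta(\vec x))$; (v) $\delta(\vec x)\le\delta(x_1\oplus y_1,x_2\oplus y_2,\dots)$; (vi) $\tfrac12(x\ominus y)=\tfrac12(x)\ominus\tfrac12(y)$. A $\delta$-homomorphism is a map preserving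 $\delta,\oplus,\neg,0$. $[0,1]$ is the standard $\delta$-algebra with $x\oplus y=\min\{1,x+y\}$, $\neg x=1-x$, $\delta(\vec x)=\sum_i x_i/2^i$. For a compact Hausdorff space $X$, $C(X,[0,1])$ is the $\delta$-algebra of continuous maps $X\to[0,1]$ with pointwise MV-operations and $\delta(\vec{\mathbf g}):=\sum_{i\ge1}\mathbf g_i/2^i$ (a uniformly convergent series). For a $\delta$-algebra $A$, $\mathrm{Max}\,A$ is the set of MV-algebra homomorphisms $A\to[0,1]$ with the subspace topology of $[0,1]^A$ (compact Hausdorff); for $a\in A$, $\hat a\colon\mathrm{Max}\,A\to[0,1]$, $\hat a(h):=h(a)$. *)

theory Defs
  imports "HOL-Analysis.Analysis"
begin

text \<open>An L-algebra (type (omega,2,1,0)) given by a carrier set and operations.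
  Infinite argument sequences are functions nat => 'a, where index 0 is the
  first argument x_1.\<close>

record 'a dalg =
  dcar   :: "'a set"
  dplus  :: "'a \<Rightarrow> 'a \<Rightarrow> 'a"
  dneg   :: "'a \<Rightarrow> 'a"
  dzero  :: "'a"
  ddelta :: "(nat \<Rightarrow> 'a) \<Rightarrow> 'a"

definition dunit :: "'a dalg \<Rightarrow> 'a" where
  "dunit A = dneg A (dzero A)"

definition dodot :: "'a dalg \<Rightarrow> 'a \<Rightarrow> 'a \<Rightarrow> 'a" where
  "dodot A a b = dneg A (dplus A (dneg A a) (dneg A b))"

definition dominus :: "'a dalg \<Rightarrow> 'a \<Rightarrow> 'a \<Rightarrow> 'a" where
  "dominus A a b = dodot A a (dneg A b)"

definition djoin :: "'a dalg \<Rightarrow> 'a \<Rightarrow> 'a \<Rightarrow> 'a" where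
  "djoin A a b = dplus A (dneg A (dplus A (dneg A a) b)) b"

definition dle :: "'a dalg \<Rightarrow> 'a \<Rightarrow> 'a \<Rightarrow> bool" where
  "dle A a b \<longleftrightarrow> djoin A a b = b"

definition ddist :: "'a dalg \<Rightarrow> 'a \<Rightarrow> 'a \<Rightarrow> 'a" where
  "ddist A a b = dplus A (dominus A a b) (dominus A b a)"

definition dhalf :: "'a dalg \<Rightarrow> 'a \<Rightarrow> 'a" where
  "dhalf A x = ddelta A (\<lambda>i. if i = 0 then x else dzero A)"

definition mv_algebra :: "'a dalg \<Rightarrow> bool" where
  "mv_algebra A \<longleftrightarrow>
     dzero A \<in> dcar A \<and>
     (\<forall>a\<in>dcar A. \<forall>b\<in>dcar A. dplus A a b \<in> dcar A) \<and>
     (\<forall>a\<in>dcar A. dneg A a \<in> dcar A) \<and>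
     (\<forall>a\<in>dcar A. \<forall>b\<in>dcar A. \<forall>c\<in>dcar A.
        dplus A (dplus A a b) c = dplus A a (dplus A b c)) \<and>
     (\<forall>a\<in>dcar A. \<forall>b\<in>dcar A. dplus A a b = dplus A b a) \<and>
     (\<forall>a\<in>dcar A. dplus A a (dzero A) = a) \<and>
     (\<forall>a\<in>dcar A. dneg A (dneg A a) = a) \<and>
     (\<forall>a\<in>dcar A. dplus A a (dneg A (dzero A)) = dneg A (dzero A)) \<and>
     (\<forall>a\<in>dcar A. \<forall>b\<in>dcar A.
        dplus A (dneg A (dplus A (dneg A a) b)) b =
        dplus A (dneg A (dplus A (dneg A b) a)) a)"

definition delta_algebra :: "'a dalg \<Rightarrow> bool" where
  "delta_algebra A \<longleftrightarrow>
     mv_algebra A \<and>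
     (\<forall>x. (\<forall>i. x i \<in> dcar A) \<longrightarrow> ddelta A x \<in> dcar A) \<and>
     \<comment> \<open>(i)\<close>
     (\<forall>x. (\<forall>i. x i \<in> dcar A) \<longrightarrow>
        ddist A (ddelta A x) (ddelta A (\<lambda>i. if i = 0 then x 0 else dzero A))
        = ddelta A (\<lambda>i. if i = 0 then dzero A else x i)) \<and>
     \<comment> \<open>(ii)\<close>
     (\<forall>x. (\<forall>i. x i \<in> dcar A) \<longrightarrow>
        dhalf A (ddelta A x) = ddelta A (\<lambda>i. dhalf A (x i))) \<and>
     \<comment> \<open>(iii)\<close>
     (\<forall>x\<in>dcar A. ddelta A (\<lambda>i. x) = x) \<and>
     \<comment> \<open>(iv)\<close>
     (\<forall>x. (\<forall>i. x i \<in> dcar A) \<longrightarrow>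
        ddelta A (\<lambda>i. if i = 0 then dzero A else x (i - 1)) = dhalf A (ddelta A x)) \<and>
     \<comment> \<open>(v)\<close>
     (\<forall>x y. (\<forall>i. x i \<in> dcar A) \<longrightarrow> (\<forall>i. y i \<in> dcar A) \<longrightarrow>
        dle A (ddelta A x) (ddelta A (\<lambda>i. dplus A (x i) (y i)))) \<and>
     \<comment> \<open>(vi)\<close>
     (\<forall>x\<in>dcar A. \<forall>y\<in>dcar A.
        dhalf A (dominus A x y) = dominus A (dhalf A x) (dhalf A y))"

definition delta_hom :: "'a dalg \<Rightarrow> 'b dalg \<Rightarrow> ('a \<Rightarrow> 'b) \<Rightarrow> bool" where
  "delta_hom A B f \<longleftrightarrow>
     (\<forall>a\<in>dcar A. f a \<in> dcar B) \<and>
     (\<forall>a\<in>dcar A. \<forall>b\<in>dcar A. f (dplus A a b) = dplus B (f a) (f b)) \<and>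
     (\<forall>a\<in>dcar A. f (dneg A a) = dneg B (f a)) \<and>
     f (dzero A) = dzero B \<and>
     (\<forall>x. (\<forall>i. x i \<in> dcar A) \<longrightarrow> f (ddelta A x) = ddelta B (\<lambda>i. f (x i)))"

text \<open>Max A: MV-algebra homomorphisms A -> [0,1]. Such maps are represented as
  functions 'a => real that are 0 outside the carrier, so the subspace topology
  of the product topology on 'a => real coincides with that of [0,1]^A.\<close>

definition MaxSpec :: "'a dalg \<Rightarrow> ('a \<Rightarrow> real) set" where
  "MaxSpec A = {h.
     (\<forall>a\<in>dcar A. h a \<in> {0..1}) \<and>
     (\<forall>a\<in>dcar A. \<forall>b\<in>dcar A. h (dplus A a b) = min 1 (h a + h b)) \<and>
     (\<forall>a\<in>dcar A. h (dneg A a) = 1 - h a) \<and>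
     h (dzero A) = 0 \<and>
     (\<forall>a. a \<notin> dcar A \<longrightarrow> h a = 0)}"

text \<open>The delta-algebra C(X,[0,1]) of continuous maps X -> [0,1]; maps are
  represented as functions that are 0 outside X.\<close>

definition cont_dalg :: "'x::topological_space set \<Rightarrow> ('x \<Rightarrow> real) dalg" where
  "cont_dalg X = \<lparr>
     dcar = {f. continuous_on X f \<and> (\<forall>x\<in>X. f x \<in> {0..1}) \<and> (\<forall>x. x \<notin> X \<longrightarrow> f x = 0)},
     dplus = (\<lambda>f g x. if x \<in> X then min 1 (f x + g x) else 0),
     dneg = (\<lambda>f x. if x \<in> X then 1 - f x else 0),
     dzero = (\<lambda>x. 0),
     ddelta = (\<lambda>gs x. if x \<in> X then (\<Sum>i. gs i x / 2 ^ Suc i) else 0) \<rparr>"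

definition eta :: "'a dalg \<Rightarrow> 'a \<Rightarrow> (('a \<Rightarrow> real) \<Rightarrow> real)" where
  "eta A a = (\<lambda>h. if h \<in> MaxSpec A then h a else 0)"

end

theory Submission
  imports Defs
begin

text \<open>
  Every MV-homomorphism \<open>h : A \<rightarrow> [0,1]\<close> automatically preserves \<open>\<delta>\<close>: axioms (i), (iv) and (v)
  give \<open>h(\<delta>(x\<^sub>1,x\<^sub>2,\<dots>)) = h(x\<^sub>1)/2 + h(\<delta>(x\<^sub>2,x\<^sub>3,\<dots>))/2\<close>, and iterating this yields
  \<open>h(\<delta>(x)) = \<Sum> h(x\<^sub>i)/2\<^sup>i\<close>. Hence \<open>\<eta>\<^sub>A\<close> is a \<open>\<delta>\<close>-homomorphism, and \<open>Max A\<close> is compact as a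
  closed subset of \<open>[0,1]\<^sup>A\<close>.

  If two \<open>\<delta>\<close>-homomorphisms agree on the image of \<open>\<eta>\<^sub>A\<close>, their equalizer \<open>E\<close> is a
  \<open>\<delta>\<close>-subalgebra of \<open>C(Max A,[0,1])\<close> separating points. Such an \<open>E\<close> contains the scalar
  multiples \<open>r\<cdot>t = \<delta>(d\<^sub>1 t, d\<^sub>2 t, \<dots>)\<close> for the binary digits \<open>d\<^sub>i\<close> of \<open>r\<close>, hence the constants
  and, for any two points, a function taking prescribed values there. As \<open>E\<close> is closed under
  \<open>min\<close> and \<open>max\<close>, the lattice form of the Stone-Weierstrass argument on the compact space
  makes \<open>E\<close> uniformly dense; and \<open>E\<close> is uniformly closed, because the limit of a fast
  converging sequence in \<open>E\<close> is expressed through \<open>\<delta>\<close> of its rescaled increments. So \<open>E\<close> is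
  everything.
\<close>

section \<open>Dyadic series\<close>

lemma summable_half_power_Suc: "summable (\<lambda>i. (1/2::real) ^ Suc i)"
  using power_half_series summable_def by blast

lemma dyadic_sum_bounds:
  fixes c :: "nat \<Rightarrow> real"
  assumes "\<And>i. 0 \<le> c i" "\<And>i. c i \<le> 1"
  shows "summable (\<lambda>i. c i / 2 ^ Suc i)" "0 \<le> (\<Sum>i. c i / 2 ^ Suc i)" "(\<Sum>i. c i / 2 ^ Suc i) \<le> 1"
proof -
  have le: "norm (c i / 2 ^ Suc i) \<le> (1/2) ^ Suc i" for i
    using assms[of i] by (simp add: power_divide divide_right_mono)
  show s: "summable (\<lambda>i. c i / 2 ^ Suc i)"
    by (rule summable_comparison_test[OF _ summable_half_power_Suc]) (use le in auto)
  show "0 \<le> (\<Sum>i. c i / 2 ^ Suc i)"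
    using assms by (intro suminf_nonneg s) auto
  have "(\<Sum>i. c i / 2 ^ Suc i) \<le> (\<Sum>i. (1/2::real) ^ Suc i)"
    by (rule suminf_le) (use le assms s summable_half_power_Suc in \<open>auto simp: power_divide\<close>)
  then show "(\<Sum>i. c i / 2 ^ Suc i) \<le> 1"
    using power_half_series sums_unique by fastforce
qed

lemma suminf_dyadic_const: "(\<Sum>i. (c::real) / 2 ^ Suc i) = c"
proof -
  have "(\<lambda>i. c * (1/2) ^ Suc i) sums (c * 1)"
    by (rule sums_mult[OF power_half_series])
  then show ?thesis by (simp add: power_divide sums_iff)
qed

lemma suminf_dyadic_single: "(\<Sum>i. (if i = 0 then (c::real) else 0) / 2 ^ Suc i) = c / 2"
proof -
  have "(\<lambda>i. (if i = 0 then c else 0) / 2 ^ Suc i) = (\<lambda>i. if i = 0 then c / 2 else 0)"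
    by auto
  then show ?thesis
    using sums_single[of 0 "\<lambda>_. c / 2"] sums_unique by (metis (no_types, lifting))
qed

lemma suminf_dyadic_head:
  fixes c :: "nat \<Rightarrow> real"
  assumes "summable (\<lambda>i. c i / 2 ^ Suc i)"
  shows "(\<Sum>i. c i / 2 ^ Suc i) = c 0 / 2 + (\<Sum>i. (if i = 0 then 0 else c i) / 2 ^ Suc i)"
proof -
  have "(\<lambda>i. c i / 2 ^ Suc i - (if i = 0 then c 0 / 2 else 0)) sums ((\<Sum>i. c i / 2 ^ Suc i) - c 0 / 2)"
    using sums_single[of 0 "\<lambda>_. c 0 / 2"] by (intro sums_diff summable_sums assms) simp
  moreover have "(\<lambda>i. c i / 2 ^ Suc i - (if i = 0 then c 0 / 2 else 0)) = (\<lambda>i. (if i = 0 then 0 else c i) / 2 ^ Suc i)"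
    by auto
  ultimately show ?thesis by (simp add: sums_iff)
qed

lemma suminf_dyadic_shift:
  fixes c :: "nat \<Rightarrow> real"
  assumes "summable (\<lambda>i. c i / 2 ^ Suc i)"
  shows "(\<Sum>i. (if i = 0 then 0 else c (i - 1)) / 2 ^ Suc i) = (\<Sum>i. c i / 2 ^ Suc i) / 2"
proof -
  have "(\<lambda>i. c i / 2 ^ Suc i / 2) sums ((\<Sum>i. c i / 2 ^ Suc i) / 2)"
    by (intro sums_divide summable_sums assms)
  then have "(\<lambda>i. (if Suc i = 0 then 0 else c (Suc i - 1)) / 2 ^ Suc (Suc i)) sums ((\<Sum>i. c i / 2 ^ Suc i) / 2)"
    by (simp add: field_simps)
  then have "(\<lambda>i. (if i = 0 then 0 else c (i - 1)) / 2 ^ Suc i) sums ((\<Sum>i. c i / 2 ^ Suc i) / 2 + 0)"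
    by (subst (asm) sums_Suc_iff) simp
  then show ?thesis by (simp add: sums_iff)
qed

lemma sums_dyadic_recursion:
  fixes s c :: "nat \<Rightarrow> real"
  assumes rec: "\<And>n. s n = c n / 2 + s (Suc n) / 2" and bounded: "\<And>n. \<bar>s n\<bar> \<le> B"
  shows "(\<lambda>n. c n / 2 ^ Suc n) sums s 0"
proof -
  have partial: "s 0 = (\<Sum>i<n. c i / 2 ^ Suc i) + s n / 2 ^ n" for n
  proof (induction n)
    case (Suc n)
    then show ?case using rec[of n] by (simp add: field_simps)
  qed simp
  have "(\<lambda>n. s n / 2 ^ n) \<longlonglongrightarrow> 0"
  proof (rule Lim_null_comparison[OF _ LIMSEQ_divide_realpow_zero[of 2 B]])
    show "\<forall>\<^sub>F n in sequentially. norm (s n / 2 ^ n) \<le> B / 2 ^ n"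
      using bounded by (intro always_eventually allI) (simp add: divide_right_mono)
  qed simp
  then have "(\<lambda>n. s 0 - s n / 2 ^ n) \<longlonglongrightarrow> s 0 - 0"
    by (intro tendsto_diff tendsto_const)
  moreover have "(\<lambda>n. s 0 - s n / 2 ^ n) = (\<lambda>n. \<Sum>i<n. c i / 2 ^ Suc i)"
    using partial by (auto simp: algebra_simps)
  ultimately show ?thesis unfolding sums_def by simp
qed

text \<open>Greedy binary expansion of \<open>r \<in> [0,1]\<close>:
  \<open>bin_rest r n = 2\<^sup>n (r - \<Sum>i<n. d\<^sub>i / 2\<^sup>i\<^sup>+\<^sup>1)\<close> where \<open>d\<^sub>i = of_bool (bin_digit r i)\<close>.\<close>

fun bin_rest :: "real \<Rightarrow> nat \<Rightarrow> real" where
  "bin_rest r 0 = r"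
| "bin_rest r (Suc n) = 2 * bin_rest r n - of_bool (1/2 \<le> bin_rest r n)"

definition bin_digit :: "real \<Rightarrow> nat \<Rightarrow> bool" where
  "bin_digit r n \<longleftrightarrow> 1/2 \<le> bin_rest r n"

lemma bin_rest_range: "0 \<le> r \<Longrightarrow> r \<le> 1 \<Longrightarrow> 0 \<le> bin_rest r n \<and> bin_rest r n \<le> 1"
  by (induction n) auto

lemma bin_digit_sums:
  assumes "0 \<le> r" "r \<le> 1"
  shows "(\<lambda>n. of_bool (bin_digit r n) / 2 ^ Suc n) sums r"
proof -
  have "(\<lambda>n. of_bool (bin_digit r n) / 2 ^ Suc n) sums bin_rest r 0"
    by (rule sums_dyadic_recursion[where B=1])
      (use bin_rest_range[OF assms] in \<open>auto simp: bin_digit_def field_simps\<close>)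
  then show ?thesis by simp
qed

lemma limit_eq_sums_increments:
  fixes w :: "nat \<Rightarrow> real"
  assumes "w \<longlonglongrightarrow> l"
    and "(\<lambda>n. max 0 (w (Suc n) - w n)) sums p" and "(\<lambda>n. max 0 (w n - w (Suc n))) sums q"
  shows "l = w 0 + p - q"
proof -
  have "(\<lambda>n. max 0 (w (Suc n) - w n) - max 0 (w n - w (Suc n))) sums (p - q)"
    using assms(2,3) by (rule sums_diff)
  moreover have "(\<lambda>n. max 0 (w (Suc n) - w n) - max 0 (w n - w (Suc n))) = (\<lambda>n. w (Suc n) - w n)"
    by (auto simp: max_def)
  ultimately have "(\<lambda>n. w (Suc n) - w n) sums (p - q)"
    by simp
  with telescope_sums[OF assms(1)] show ?thesis
    using sums_unique2 by fastforce
qed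

section \<open>The \<open>\<delta>\<close>-algebra \<open>C(X,[0,1])\<close>\<close>

lemma cont_dalg_simps:
  "dcar (cont_dalg X) = {f. continuous_on X f \<and> (\<forall>x\<in>X. f x \<in> {0..1}) \<and> (\<forall>x. x \<notin> X \<longrightarrow> f x = 0)}"
  "dplus (cont_dalg X) = (\<lambda>f g x. if x \<in> X then min 1 (f x + g x) else 0)"
  "dneg (cont_dalg X) = (\<lambda>f x. if x \<in> X then 1 - f x else 0)"
  "dzero (cont_dalg X) = (\<lambda>x. 0)"
  "ddelta (cont_dalg X) = (\<lambda>gs x. if x \<in> X then (\<Sum>i. gs i x / 2 ^ Suc i) else 0)"
  by (simp_all add: cont_dalg_def)

lemma cont_dalg_carrierD:
  assumes "f \<in> dcar (cont_dalg X)"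
  shows "continuous_on X f" "x \<in> X \<Longrightarrow> 0 \<le> f x" "x \<in> X \<Longrightarrow> f x \<le> 1" "x \<notin> X \<Longrightarrow> f x = 0"
  using assms by (auto simp: cont_dalg_simps)

lemma cont_dalg_carrierI:
  assumes "continuous_on X f" "\<And>x. x \<in> X \<Longrightarrow> 0 \<le> f x \<and> f x \<le> 1" "\<And>x. x \<notin> X \<Longrightarrow> f x = 0"
  shows "f \<in> dcar (cont_dalg X)"
  using assms by (auto simp: cont_dalg_simps)

lemma cont_dalg_range: "f \<in> dcar (cont_dalg X) \<Longrightarrow> x \<in> X \<Longrightarrow> 0 \<le> f x \<and> f x \<le> 1"
  by (simp add: cont_dalg_carrierD(2,3))

lemma cont_dalg_apply:
  assumes "x \<in> X"
  shows "dplus (cont_dalg X) f g x = min 1 (f x + g x)"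
    "dneg (cont_dalg X) f x = 1 - f x"
    "dzero (cont_dalg X) x = 0"
    "ddelta (cont_dalg X) gs x = (\<Sum>i. gs i x / 2 ^ Suc i)"
    "dominus (cont_dalg X) f g x = max 0 (f x - g x)"
    "dhalf (cont_dalg X) f x = f x / 2"
proof -
  show "dplus (cont_dalg X) f g x = min 1 (f x + g x)" "dneg (cont_dalg X) f x = 1 - f x"
    "dzero (cont_dalg X) x = 0" "ddelta (cont_dalg X) gs x = (\<Sum>i. gs i x / 2 ^ Suc i)"
    "dominus (cont_dalg X) f g x = max 0 (f x - g x)"
    using assms by (auto simp: cont_dalg_simps dominus_def dodot_def)
  have "(\<lambda>i. (if i = 0 then f else dzero (cont_dalg X)) x / 2 ^ Suc i)
      = (\<lambda>i. (if i = 0 then f x else 0) / 2 ^ Suc i)"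
    by (simp add: cont_dalg_simps if_distribR cong: if_cong)
  then show "dhalf (cont_dalg X) f x = f x / 2"
    using assms suminf_dyadic_single[of "f x"] by (simp add: dhalf_def cont_dalg_simps(5))
qed

lemma cont_dalg_apply_outside:
  assumes "x \<notin> X"
  shows "dplus (cont_dalg X) f g x = 0"
    "dneg (cont_dalg X) f x = 0"
    "ddelta (cont_dalg X) gs x = 0"
    "dominus (cont_dalg X) f g x = 0"
    "djoin (cont_dalg X) f g x = 0"
    "dhalf (cont_dalg X) f x = 0"
  using assms by (auto simp: cont_dalg_simps dominus_def dodot_def djoin_def dhalf_def)

lemma cont_dalg_join_apply:
  assumes "x \<in> X" "f x \<le> 1" "g x \<le> 1"
  shows "djoin (cont_dalg X) f g x = max (f x) (g x)"
  using assms by (auto simp: cont_dalg_simps djoin_def)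

lemma ext_split:
  assumes "\<And>x. x \<in> X \<Longrightarrow> f x = g x" "\<And>x. x \<notin> X \<Longrightarrow> f x = g x"
  shows "f = g"
  using assms by blast

lemma cont_dalg_dyadic_bounds:
  assumes "\<And>i. gs i \<in> dcar (cont_dalg X)" "x \<in> X"
  shows "summable (\<lambda>i. gs i x / 2 ^ Suc i)" "0 \<le> (\<Sum>i. gs i x / 2 ^ Suc i)"
    "(\<Sum>i. gs i x / 2 ^ Suc i) \<le> 1"
  using dyadic_sum_bounds[of "\<lambda>i. gs i x"] cont_dalg_carrierD(2,3)[OF assms(1) assms(2)] by auto

lemma continuous_on_dyadic_sum:
  assumes "\<And>i. gs i \<in> dcar (cont_dalg X)"
  shows "continuous_on X (\<lambda>x. \<Sum>i. gs i x / 2 ^ Suc i)"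
proof (rule uniform_limit_theorem[where F=sequentially])
  show "\<forall>\<^sub>F n in sequentially. continuous_on X (\<lambda>x. \<Sum>i<n. gs i x / 2 ^ Suc i)"
    using cont_dalg_carrierD(1)[OF assms] by (intro always_eventually allI continuous_intros) auto
  show "uniform_limit X (\<lambda>n x. \<Sum>i<n. gs i x / 2 ^ Suc i) (\<lambda>x. \<Sum>i. gs i x / 2 ^ Suc i) sequentially"
  proof (rule Weierstrass_m_test[OF _ summable_half_power_Suc])
    fix n x assume "x \<in> X"
    then show "norm (gs n x / 2 ^ Suc n) \<le> (1/2) ^ Suc n"
      using cont_dalg_carrierD(2,3)[OF assms[of n], of x] by (simp add: power_divide divide_right_mono)
  qed
qed simp

lemma cont_dalg_delta_closed:
  assumes "\<And>i. gs i \<in> dcar (cont_dalg X)"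
  shows "ddelta (cont_dalg X) gs \<in> dcar (cont_dalg X)"
proof (rule cont_dalg_carrierI)
  show "continuous_on X (ddelta (cont_dalg X) gs)"
    using continuous_on_dyadic_sum[OF assms] by (rule continuous_on_cong[THEN iffD1, rotated 2])
      (simp_all add: cont_dalg_apply)
qed (use cont_dalg_dyadic_bounds[OF assms] in \<open>auto simp: cont_dalg_simps\<close>)

lemma cont_dalg_plus_closed:
  assumes "f \<in> dcar (cont_dalg X)" "g \<in> dcar (cont_dalg X)"
  shows "dplus (cont_dalg X) f g \<in> dcar (cont_dalg X)"
proof (rule cont_dalg_carrierI)
  have "continuous_on X (\<lambda>x. min 1 (f x + g x))"
    using cont_dalg_carrierD(1)[OF assms(1)] cont_dalg_carrierD(1)[OF assms(2)]
    by (intro continuous_intros)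
  then show "continuous_on X (dplus (cont_dalg X) f g)"
    by (rule continuous_on_cong[THEN iffD1, rotated 2]) (simp_all add: cont_dalg_apply)
qed (use cont_dalg_carrierD[OF assms(1)] cont_dalg_carrierD[OF assms(2)] in \<open>auto simp: cont_dalg_simps\<close>)

lemma cont_dalg_neg_closed:
  assumes "f \<in> dcar (cont_dalg X)"
  shows "dneg (cont_dalg X) f \<in> dcar (cont_dalg X)"
proof (rule cont_dalg_carrierI)
  have "continuous_on X (\<lambda>x. 1 - f x)"
    using cont_dalg_carrierD(1)[OF assms] by (intro continuous_intros)
  then show "continuous_on X (dneg (cont_dalg X) f)"
    by (rule continuous_on_cong[THEN iffD1, rotated 2]) (simp_all add: cont_dalg_apply)
qed (use cont_dalg_carrierD[OF assms] in \<open>auto simp: cont_dalg_simps\<close>)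

lemma cont_dalg_zero_closed: "dzero (cont_dalg X) \<in> dcar (cont_dalg X)"
  by (auto simp: cont_dalg_simps)

lemma mv_algebra_cont_dalg: "mv_algebra (cont_dalg X)"
  unfolding mv_algebra_def
proof (intro conjI ballI cont_dalg_zero_closed cont_dalg_plus_closed cont_dalg_neg_closed)
  fix a b c assume abc: "a \<in> dcar (cont_dalg X)" "b \<in> dcar (cont_dalg X)" "c \<in> dcar (cont_dalg X)"
  show "dplus (cont_dalg X) (dplus (cont_dalg X) a b) c = dplus (cont_dalg X) a (dplus (cont_dalg X) b c)"
    by (rule ext_split[where X=X])
      (auto simp: cont_dalg_apply cont_dalg_apply_outside min_def
        dest: cont_dalg_range[OF abc(1)] cont_dalg_range[OF abc(2)] cont_dalg_range[OF abc(3)])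
next
  fix a b assume ab: "a \<in> dcar (cont_dalg X)" "b \<in> dcar (cont_dalg X)"
  show "dplus (cont_dalg X) a b = dplus (cont_dalg X) b a"
    by (rule ext_split[where X=X]) (simp_all add: cont_dalg_apply cont_dalg_apply_outside)
  show "dplus (cont_dalg X) (dneg (cont_dalg X) (dplus (cont_dalg X) (dneg (cont_dalg X) a) b)) b =
        dplus (cont_dalg X) (dneg (cont_dalg X) (dplus (cont_dalg X) (dneg (cont_dalg X) b) a)) a"
    by (rule ext_split[where X=X])
      (auto simp: cont_dalg_apply cont_dalg_apply_outside min_def
        dest: cont_dalg_range[OF ab(1)] cont_dalg_range[OF ab(2)])
next
  fix a assume a: "a \<in> dcar (cont_dalg X)"
  show "dplus (cont_dalg X) a (dzero (cont_dalg X)) = a"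
    "dneg (cont_dalg X) (dneg (cont_dalg X) a) = a"
    "dplus (cont_dalg X) a (dneg (cont_dalg X) (dzero (cont_dalg X))) = dneg (cont_dalg X) (dzero (cont_dalg X))"
    by (rule ext_split[where X=X];
        use cont_dalg_range[OF a] cont_dalg_carrierD(4)[OF a] in \<open>auto simp: cont_dalg_apply cont_dalg_apply_outside\<close>)+
qed

lemma cont_dalg_dist_delta_head:
  assumes gs: "\<And>i. gs i \<in> dcar (cont_dalg X)"
  shows "ddist (cont_dalg X) (ddelta (cont_dalg X) gs)
           (ddelta (cont_dalg X) (\<lambda>i. if i = 0 then gs 0 else dzero (cont_dalg X)))
         = ddelta (cont_dalg X) (\<lambda>i. if i = 0 then dzero (cont_dalg X) else gs i)"
proof (rule ext_split[where X=X])
  fix x assume x: "x \<in> X"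
  define tail where "tail = (\<Sum>i. (if i = 0 then 0 else gs i x) / 2 ^ Suc i)"
  have split: "(\<Sum>i. gs i x / 2 ^ Suc i) = gs 0 x / 2 + tail"
    unfolding tail_def by (rule suminf_dyadic_head[OF cont_dalg_dyadic_bounds(1)[OF gs x]])
  have "0 \<le> tail"
    unfolding tail_def using cont_dalg_range[OF gs x] by (intro dyadic_sum_bounds(2)) auto
  moreover have "tail \<le> 1"
    using split cont_dalg_dyadic_bounds(3)[of gs, OF gs x] cont_dalg_range[OF gs x, of 0] by linarith
  ultimately show "ddist (cont_dalg X) (ddelta (cont_dalg X) gs)
           (ddelta (cont_dalg X) (\<lambda>i. if i = 0 then gs 0 else dzero (cont_dalg X))) x
         = ddelta (cont_dalg X) (\<lambda>i. if i = 0 then dzero (cont_dalg X) else gs i) x"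
    using x split unfolding tail_def
    by (simp add: ddist_def cont_dalg_apply if_distribR suminf_dyadic_single del: power_Suc cong: if_cong)
qed (simp add: ddist_def cont_dalg_apply_outside)

lemma cont_dalg_delta_mono:
  assumes gs: "\<And>i. gs i \<in> dcar (cont_dalg X)" and hs: "\<And>i. hs i \<in> dcar (cont_dalg X)"
  shows "dle (cont_dalg X) (ddelta (cont_dalg X) gs)
           (ddelta (cont_dalg X) (\<lambda>i. dplus (cont_dalg X) (gs i) (hs i)))"
  unfolding dle_def
proof (rule ext_split[where X=X])
  fix x assume x: "x \<in> X"
  have sum: "\<And>i. dplus (cont_dalg X) (gs i) (hs i) \<in> dcar (cont_dalg X)"
    by (intro cont_dalg_plus_closed gs hs)
  have "(\<Sum>i. gs i x / 2 ^ Suc i) \<le> (\<Sum>i. dplus (cont_dalg X) (gs i) (hs i) x / 2 ^ Suc i)"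
  proof (rule suminf_le)
    show "gs i x / 2 ^ Suc i \<le> dplus (cont_dalg X) (gs i) (hs i) x / 2 ^ Suc i" for i
      using cont_dalg_range[OF gs x, of i] cont_dalg_range[OF hs x, of i] x
      by (auto simp: cont_dalg_apply intro!: divide_right_mono)
  qed (intro cont_dalg_dyadic_bounds(1)[of _ X, OF _ x] gs sum)+
  then show "djoin (cont_dalg X) (ddelta (cont_dalg X) gs)
      (ddelta (cont_dalg X) (\<lambda>i. dplus (cont_dalg X) (gs i) (hs i))) x =
    ddelta (cont_dalg X) (\<lambda>i. dplus (cont_dalg X) (gs i) (hs i)) x"
    using x cont_dalg_dyadic_bounds(3)[OF gs x] cont_dalg_dyadic_bounds(3)[OF sum x]
    by (subst cont_dalg_join_apply) (auto simp: cont_dalg_apply)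
qed (simp add: cont_dalg_apply_outside)

lemma cont_dalg_half_delta:
  assumes gs: "\<And>i. gs i \<in> dcar (cont_dalg X)"
  shows "dhalf (cont_dalg X) (ddelta (cont_dalg X) gs) = ddelta (cont_dalg X) (\<lambda>i. dhalf (cont_dalg X) (gs i))"
proof (rule ext_split[where X=X])
  fix x assume x: "x \<in> X"
  have "(\<lambda>i. gs i x / 2 ^ Suc i / 2) sums ((\<Sum>i. gs i x / 2 ^ Suc i) / 2)"
    using cont_dalg_dyadic_bounds(1)[of gs, OF gs x] by (intro sums_divide summable_sums)
  then show "dhalf (cont_dalg X) (ddelta (cont_dalg X) gs) x
      = ddelta (cont_dalg X) (\<lambda>i. dhalf (cont_dalg X) (gs i)) x"
    using x by (simp add: cont_dalg_apply sums_iff field_simps)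
qed (simp add: cont_dalg_apply_outside)

lemma cont_dalg_delta_shift:
  assumes gs: "\<And>i. gs i \<in> dcar (cont_dalg X)"
  shows "ddelta (cont_dalg X) (\<lambda>i. if i = 0 then dzero (cont_dalg X) else gs (i - 1))
    = dhalf (cont_dalg X) (ddelta (cont_dalg X) gs)"
proof (rule ext_split[where X=X])
  fix x assume x: "x \<in> X"
  show "ddelta (cont_dalg X) (\<lambda>i. if i = 0 then dzero (cont_dalg X) else gs (i - 1)) x
      = dhalf (cont_dalg X) (ddelta (cont_dalg X) gs) x"
    using suminf_dyadic_shift[of "\<lambda>i. gs i x"] cont_dalg_dyadic_bounds(1)[of gs, OF gs x] x
    by (simp add: cont_dalg_apply if_distribR cong: if_cong)
qed (simp add: cont_dalg_apply_outside)

lemma delta_algebra_cont_dalg: "delta_algebra (cont_dalg X)"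
  unfolding delta_algebra_def
proof (intro conjI allI impI ballI mv_algebra_cont_dalg)
  fix gs hs :: "nat \<Rightarrow> _"
  assume "\<forall>i. gs i \<in> dcar (cont_dalg X)" "\<forall>i. hs i \<in> dcar (cont_dalg X)"
  then show "dle (cont_dalg X) (ddelta (cont_dalg X) gs) (ddelta (cont_dalg X) (\<lambda>i. dplus (cont_dalg X) (gs i) (hs i)))"
    by (intro cont_dalg_delta_mono) auto
next
  fix gs :: "nat \<Rightarrow> _" assume gs: "\<forall>i. gs i \<in> dcar (cont_dalg X)"
  then show "ddelta (cont_dalg X) gs \<in> dcar (cont_dalg X)"
    "ddist (cont_dalg X) (ddelta (cont_dalg X) gs)
       (ddelta (cont_dalg X) (\<lambda>i. if i = 0 then gs 0 else dzero (cont_dalg X)))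
     = ddelta (cont_dalg X) (\<lambda>i. if i = 0 then dzero (cont_dalg X) else gs i)"
    "dhalf (cont_dalg X) (ddelta (cont_dalg X) gs) = ddelta (cont_dalg X) (\<lambda>i. dhalf (cont_dalg X) (gs i))"
    "ddelta (cont_dalg X) (\<lambda>i. if i = 0 then dzero (cont_dalg X) else gs (i - 1))
     = dhalf (cont_dalg X) (ddelta (cont_dalg X) gs)"
    by (simp_all add: cont_dalg_delta_closed cont_dalg_dist_delta_head cont_dalg_half_delta
        cont_dalg_delta_shift)
next
  fix a assume a: "a \<in> dcar (cont_dalg X)"
  show "ddelta (cont_dalg X) (\<lambda>i. a) = a"
    by (rule ext_split[where X=X]) (use cont_dalg_carrierD(4)[OF a] in
      \<open>simp_all add: cont_dalg_apply cont_dalg_apply_outside suminf_dyadic_const del: power_Suc\<close>)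
next
  fix a b assume "a \<in> dcar (cont_dalg X)" "b \<in> dcar (cont_dalg X)"
  show "dhalf (cont_dalg X) (dominus (cont_dalg X) a b) = dominus (cont_dalg X) (dhalf (cont_dalg X) a) (dhalf (cont_dalg X) b)"
    by (rule ext_split[where X=X]) (auto simp: cont_dalg_apply cont_dalg_apply_outside max_def)
qed

primrec dmultiple :: "('x \<Rightarrow> real) dalg \<Rightarrow> nat \<Rightarrow> ('x \<Rightarrow> real) \<Rightarrow> ('x \<Rightarrow> real)" where
  "dmultiple C 0 t = dzero C"
| "dmultiple C (Suc k) t = dplus C t (dmultiple C k t)"

definition dscale :: "('x \<Rightarrow> real) dalg \<Rightarrow> real \<Rightarrow> ('x \<Rightarrow> real) \<Rightarrow> ('x \<Rightarrow> real)" where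
  "dscale C r t = ddelta C (\<lambda>i. if bin_digit r i then t else dzero C)"

definition dmeet :: "('x \<Rightarrow> real) dalg \<Rightarrow> ('x \<Rightarrow> real) \<Rightarrow> ('x \<Rightarrow> real) \<Rightarrow> ('x \<Rightarrow> real)" where
  "dmeet C a b = dominus C a (dominus C a b)"

lemma dmultiple_apply: "x \<in> X \<Longrightarrow> 0 \<le> t x \<Longrightarrow> dmultiple (cont_dalg X) k t x = min 1 (real k * t x)"
  by (induction k) (simp_all add: cont_dalg_apply min_def algebra_simps)

lemma dscale_apply:
  assumes "x \<in> X" "0 \<le> r" "r \<le> 1"
  shows "dscale (cont_dalg X) r t x = r * t x"
proof -
  have "(\<lambda>i. t x * (of_bool (bin_digit r i) / 2 ^ Suc i)) sums (t x * r)"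
    by (rule sums_mult[OF bin_digit_sums[OF assms(2,3)]])
  moreover have "(\<lambda>i. (if bin_digit r i then t else dzero (cont_dalg X)) x / 2 ^ Suc i)
      = (\<lambda>i. t x * (of_bool (bin_digit r i) / 2 ^ Suc i))"
    by (auto simp: cont_dalg_simps)
  ultimately show ?thesis
    using assms(1) by (simp add: dscale_def cont_dalg_apply(4) sums_iff mult.commute)
qed

lemma dmeet_apply: "x \<in> X \<Longrightarrow> 0 \<le> a x \<Longrightarrow> 0 \<le> b x \<Longrightarrow> dmeet (cont_dalg X) a b x = min (a x) (b x)"
  by (simp add: dmeet_def cont_dalg_apply max_def min_def)

lemma dmultiple_dyadic_sums:
  assumes x: "x \<in> X" and a: "\<And>n. 0 \<le> a n x" "\<And>n. a n x \<le> (1/2) ^ Suc n"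
  shows "(\<lambda>n. a n x) sums ddelta (cont_dalg X) (\<lambda>n. dmultiple (cont_dalg X) (2 ^ Suc n) (a n)) x"
proof -
  have "dmultiple (cont_dalg X) (2 ^ Suc n) (a n) x / 2 ^ Suc n = a n x" for n
  proof -
    have "(2::real) ^ Suc n * a n x \<le> 2 ^ Suc n * (1/2) ^ Suc n"
      using a(2) by (rule mult_left_mono) simp
    then have "(2::real) ^ Suc n * a n x \<le> 1"
      by (simp add: power_one_over)
    then show ?thesis
      using dmultiple_apply[of x X "a n", OF x a(1)] by simp
  qed
  moreover have "summable (\<lambda>n. a n x)"
    using a by (intro summable_comparison_test[OF _ summable_half_power_Suc]) auto
  ultimately show ?thesis
    using x by (simp add: cont_dalg_apply summable_sums)
qed

section \<open>The maximal spectrum\<close>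

locale delta_alg =
  fixes A :: "'a dalg"
  assumes is_delta_algebra: "delta_algebra A"
begin

lemma zero_closed: "dzero A \<in> dcar A"
  and plus_closed: "a \<in> dcar A \<Longrightarrow> b \<in> dcar A \<Longrightarrow> dplus A a b \<in> dcar A"
  and neg_closed: "a \<in> dcar A \<Longrightarrow> dneg A a \<in> dcar A"
  and plus_comm: "a \<in> dcar A \<Longrightarrow> b \<in> dcar A \<Longrightarrow> dplus A a b = dplus A b a"
  and plus_zero: "a \<in> dcar A \<Longrightarrow> dplus A a (dzero A) = a"
  using is_delta_algebra by (simp_all add: delta_algebra_def mv_algebra_def)

lemma zero_plus: "a \<in> dcar A \<Longrightarrow> dplus A (dzero A) a = a"
  using plus_comm plus_zero zero_closed by metis

lemma delta_closed: "(\<And>i. x i \<in> dcar A) \<Longrightarrow> ddelta A x \<in> dcar A"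
  and dist_delta_head: "(\<And>i. x i \<in> dcar A) \<Longrightarrow>
    ddist A (ddelta A x) (ddelta A (\<lambda>i. if i = 0 then x 0 else dzero A))
      = ddelta A (\<lambda>i. if i = 0 then dzero A else x i)"
  and delta_const: "a \<in> dcar A \<Longrightarrow> ddelta A (\<lambda>i. a) = a"
  and delta_shift: "(\<And>i. x i \<in> dcar A) \<Longrightarrow>
    ddelta A (\<lambda>i. if i = 0 then dzero A else x (i - 1)) = dhalf A (ddelta A x)"
  and delta_mono: "(\<And>i. x i \<in> dcar A) \<Longrightarrow> (\<And>i. y i \<in> dcar A) \<Longrightarrow>
    dle A (ddelta A x) (ddelta A (\<lambda>i. dplus A (x i) (y i)))"
  using is_delta_algebra by (simp_all add: delta_algebra_def)

lemma ominus_closed: "a \<in> dcar A \<Longrightarrow> b \<in> dcar A \<Longrightarrow> dominus A a b \<in> dcar A"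
  unfolding dominus_def dodot_def by (intro neg_closed plus_closed)

lemma half_closed: "a \<in> dcar A \<Longrightarrow> dhalf A a \<in> dcar A"
  unfolding dhalf_def by (intro delta_closed) (auto simp: zero_closed)

lemma half_head_le_delta:
  assumes x: "\<And>i. x i \<in> dcar A"
  shows "dle A (dhalf A (x 0)) (ddelta A x)"
proof -
  have "(\<lambda>i. dplus A (if i = 0 then x 0 else dzero A) (if i = 0 then dzero A else x i)) = x"
    using x by (auto simp: plus_zero zero_plus)
  then show ?thesis
    using delta_mono[of "\<lambda>i. if i = 0 then x 0 else dzero A" "\<lambda>i. if i = 0 then dzero A else x i"]
    using x zero_closed by (simp add: dhalf_def)
qed

lemma dist_delta_half_head:
  assumes x: "\<And>i. x i \<in> dcar A"
  shows "ddist A (ddelta A x) (dhalf A (x 0)) = dhalf A (ddelta A (\<lambda>i. x (Suc i)))"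
proof -
  have "ddist A (ddelta A x) (dhalf A (x 0)) = ddelta A (\<lambda>i. if i = 0 then dzero A else x i)"
    using dist_delta_head[of x, OF x] by (simp add: dhalf_def)
  also have "(\<lambda>i. if i = 0 then dzero A else x i) = (\<lambda>i. if i = 0 then dzero A else x (Suc (i - 1)))"
    by auto
  finally show ?thesis
    using delta_shift[of "\<lambda>i. x (Suc i)"] x by simp
qed

end

locale max_point = delta_alg +
  fixes h :: "'a \<Rightarrow> real"
  assumes max: "h \<in> MaxSpec A"
begin

lemma hom_range: "a \<in> dcar A \<Longrightarrow> 0 \<le> h a \<and> h a \<le> 1"
  and hom_plus: "a \<in> dcar A \<Longrightarrow> b \<in> dcar A \<Longrightarrow> h (dplus A a b) = min 1 (h a + h b)"
  and hom_neg: "a \<in> dcar A \<Longrightarrow> h (dneg A a) = 1 - h a"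
  and hom_zero: "h (dzero A) = 0"
  using max by (auto simp: MaxSpec_def)

lemma hom_ominus: "a \<in> dcar A \<Longrightarrow> b \<in> dcar A \<Longrightarrow> h (dominus A a b) = max 0 (h a - h b)"
  using hom_range[of a] hom_range[of b]
  by (simp add: dominus_def dodot_def hom_neg hom_plus neg_closed plus_closed min_def max_def)

lemma hom_dist: "a \<in> dcar A \<Longrightarrow> b \<in> dcar A \<Longrightarrow> h (ddist A a b) = \<bar>h a - h b\<bar>"
  using hom_range[of a] hom_range[of b]
  by (simp add: ddist_def hom_ominus hom_plus ominus_closed min_def max_def abs_if)

lemma hom_mono:
  assumes "a \<in> dcar A" "b \<in> dcar A" "dle A a b"
  shows "h a \<le> h b"
proof -
  have "h (djoin A a b) = max (h a) (h b)"
    using assms hom_range[of a] hom_range[of b]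
    by (simp add: djoin_def hom_neg hom_plus neg_closed plus_closed min_def max_def)
  then show ?thesis using assms(3) by (simp add: dle_def)
qed

lemma hom_delta_split:
  assumes x: "\<And>i. x i \<in> dcar A"
  shows "h (ddelta A x) = h (dhalf A (x 0)) + h (dhalf A (ddelta A (\<lambda>i. x (Suc i))))"
proof -
  have "h (dhalf A (x 0)) \<le> h (ddelta A x)"
    using half_head_le_delta[OF x] by (intro hom_mono half_closed delta_closed x)
  moreover have "\<bar>h (ddelta A x) - h (dhalf A (x 0))\<bar> = h (dhalf A (ddelta A (\<lambda>i. x (Suc i))))"
    using hom_dist[of "ddelta A x" "dhalf A (x 0)"] dist_delta_half_head[of x, OF x]
    by (simp add: x delta_closed half_closed)
  ultimately show ?thesis by linarith
qed

lemma hom_half: "a \<in> dcar A \<Longrightarrow> h (dhalf A a) = h a / 2"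
  using hom_delta_split[of "\<lambda>i. a"] by (simp add: delta_const)

lemma hom_delta:
  assumes x: "\<And>i. x i \<in> dcar A"
  shows "h (ddelta A x) = (\<Sum>i. h (x i) / 2 ^ Suc i)"
proof -
  have "(\<lambda>n. h (x n) / 2 ^ Suc n) sums h (ddelta A (\<lambda>i. x (i + 0)))"
  proof (rule sums_dyadic_recursion)
    show "h (ddelta A (\<lambda>i. x (i + n))) = h (x n) / 2 + h (ddelta A (\<lambda>i. x (i + Suc n))) / 2" for n
      using hom_delta_split[of "\<lambda>i. x (i + n)"] x by (simp add: hom_half delta_closed)
    show "\<bar>h (ddelta A (\<lambda>i. x (i + n)))\<bar> \<le> 1" for n
      using hom_range[of "ddelta A (\<lambda>i. x (i + n))"] x by (simp add: delta_closed)
  qed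
  then show ?thesis by (simp add: sums_iff)
qed

end

lemma compact_MaxSpec: "compact (MaxSpec A)"
proof -
  have "compactin (product_topology (\<lambda>_. euclidean) UNIV) (PiE UNIV (\<lambda>a. if a \<in> dcar A then {0..1} else {0::real}))"
    by (subst compactin_PiE) auto
  then have "compact (PiE UNIV (\<lambda>a. if a \<in> dcar A then {0..1} else {0::real}))"
    by (simp add: euclidean_product_topology)
  moreover have "closed ((\<Inter>a\<in>dcar A. \<Inter>b\<in>dcar A. {h. h (dplus A a b) = min 1 (h a + h b)}) \<inter>
      (\<Inter>a\<in>dcar A. {h. h (dneg A a) = 1 - h a}) \<inter> {h::'a \<Rightarrow> real. h (dzero A) = 0})"
    by (intro closed_Int closed_INT ballI closed_Collect_eq continuous_intros continuous_on_product_coordinates)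
  moreover have "MaxSpec A = PiE UNIV (\<lambda>a. if a \<in> dcar A then {0..1} else {0}) \<inter>
      ((\<Inter>a\<in>dcar A. \<Inter>b\<in>dcar A. {h. h (dplus A a b) = min 1 (h a + h b)}) \<inter>
      (\<Inter>a\<in>dcar A. {h. h (dneg A a) = 1 - h a}) \<inter> {h. h (dzero A) = 0})"
    by (auto simp: MaxSpec_def PiE_iff split: if_splits)
  ultimately show ?thesis by auto
qed

lemma eta_closed:
  assumes "a \<in> dcar A"
  shows "eta A a \<in> dcar (cont_dalg (MaxSpec A))"
proof (rule cont_dalg_carrierI)
  have "continuous_on (MaxSpec A) (\<lambda>h. h a)"
    by (rule continuous_on_subset[OF continuous_on_product_coordinates]) simp
  then show "continuous_on (MaxSpec A) (eta A a)"
    by (rule continuous_on_cong[THEN iffD1, rotated 2]) (simp_all add: eta_def)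
qed (use assms in \<open>auto simp: eta_def MaxSpec_def\<close>)

lemma eta_separates:
  assumes "h \<in> MaxSpec A" "h' \<in> MaxSpec A" "h \<noteq> h'"
  shows "\<exists>a\<in>dcar A. eta A a h \<noteq> eta A a h'"
proof -
  obtain a where "h a \<noteq> h' a" using assms(3) by auto
  moreover from this have "a \<in> dcar A" using assms(1,2) by (force simp: MaxSpec_def)
  ultimately show ?thesis using assms(1,2) by (auto simp: eta_def)
qed

context delta_alg
begin

lemma max_pointI: "h \<in> MaxSpec A \<Longrightarrow> max_point A h"
  by unfold_locales

lemma eta_delta_hom: "delta_hom A (cont_dalg (MaxSpec A)) (eta A)"
  unfolding delta_hom_def
proof (intro conjI ballI allI impI eta_closed)
  fix a b assume "a \<in> dcar A" "b \<in> dcar A"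
  then show "eta A (dplus A a b) = dplus (cont_dalg (MaxSpec A)) (eta A a) (eta A b)"
    by (auto simp: eta_def cont_dalg_simps max_point.hom_plus[OF max_pointI])
next
  fix a assume "a \<in> dcar A"
  then show "eta A (dneg A a) = dneg (cont_dalg (MaxSpec A)) (eta A a)"
    by (auto simp: eta_def cont_dalg_simps max_point.hom_neg[OF max_pointI])
next
  show "eta A (dzero A) = dzero (cont_dalg (MaxSpec A))"
    by (auto simp: eta_def cont_dalg_simps max_point.hom_zero[OF max_pointI])
next
  fix x :: "nat \<Rightarrow> 'a" assume "\<forall>i. x i \<in> dcar A"
  then show "eta A (ddelta A x) = ddelta (cont_dalg (MaxSpec A)) (\<lambda>i. eta A (x i))"
    by (auto simp: eta_def cont_dalg_simps max_point.hom_delta[OF max_pointI])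
qed

end

section \<open>Separating \<open>\<delta>\<close>-subalgebras of \<open>C(X,[0,1])\<close>\<close>

locale cont_subalgebra =
  fixes X :: "'x::topological_space set" and E :: "('x \<Rightarrow> real) set"
  assumes subset_carrier: "E \<subseteq> dcar (cont_dalg X)"
    and zero_mem: "dzero (cont_dalg X) \<in> E"
    and plus_mem: "a \<in> E \<Longrightarrow> b \<in> E \<Longrightarrow> dplus (cont_dalg X) a b \<in> E"
    and neg_mem: "a \<in> E \<Longrightarrow> dneg (cont_dalg X) a \<in> E"
    and delta_mem: "(\<And>i. gs i \<in> E) \<Longrightarrow> ddelta (cont_dalg X) gs \<in> E"
begin

abbreviation "C \<equiv> cont_dalg X"

lemma mem_range: "a \<in> E \<Longrightarrow> x \<in> X \<Longrightarrow> 0 \<le> a x \<and> a x \<le> 1"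
  using subset_carrier cont_dalg_range by blast

lemma ominus_mem: "a \<in> E \<Longrightarrow> b \<in> E \<Longrightarrow> dominus C a b \<in> E"
  unfolding dominus_def dodot_def by (intro neg_mem plus_mem)

lemma half_mem: "a \<in> E \<Longrightarrow> dhalf C a \<in> E"
  unfolding dhalf_def by (intro delta_mem) (auto simp: zero_mem)

lemma multiple_mem: "a \<in> E \<Longrightarrow> dmultiple C k a \<in> E"
  by (induction k) (auto simp: zero_mem plus_mem)

lemma scale_mem: "a \<in> E \<Longrightarrow> dscale C r a \<in> E"
  unfolding dscale_def by (intro delta_mem) (auto simp: zero_mem)

lemma meet_mem: "a \<in> E \<Longrightarrow> b \<in> E \<Longrightarrow> dmeet C a b \<in> E"
  unfolding dmeet_def by (intro ominus_mem)

lemma join_mem: "a \<in> E \<Longrightarrow> b \<in> E \<Longrightarrow> djoin C a b \<in> E"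
  unfolding djoin_def by (intro neg_mem plus_mem)

lemma const_mem:
  assumes "0 \<le> c" "c \<le> 1"
  obtains w where "w \<in> E" "\<And>x. x \<in> X \<Longrightarrow> w x = c"
proof
  show "dscale C c (dneg C (dzero C)) \<in> E"
    by (intro scale_mem neg_mem zero_mem)
  show "dscale C c (dneg C (dzero C)) x = c" if "x \<in> X" for x
    using dscale_apply[OF that assms] that by (simp add: cont_dalg_apply)
qed

lemma Min_mem:
  assumes "finite F" "F \<noteq> {}" "\<And>y. y \<in> F \<Longrightarrow> W y \<in> E"
  obtains v where "v \<in> E" "\<And>z. z \<in> X \<Longrightarrow> v z = Min ((\<lambda>y. W y z) ` F)"
  using assms
proof (induction F arbitrary: thesis rule: finite_ne_induct)
  case (insert y F)
  obtain v where v: "v \<in> E" "\<And>z. z \<in> X \<Longrightarrow> v z = Min ((\<lambda>y. W y z) ` F)"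
    using insert.IH insert.prems(2) by blast
  show ?case
  proof (rule insert.prems(1))
    show "dmeet C (W y) v \<in> E" by (intro meet_mem v(1) insert.prems(2)) simp
    show "dmeet C (W y) v z = Min ((\<lambda>y. W y z) ` insert y F)" if "z \<in> X" for z
      using that insert.hyps(1,2) v mem_range[of "W y" z] mem_range[of v z] insert.prems(2)
      by (simp add: dmeet_apply)
  qed
qed auto

lemma Max_mem:
  assumes "finite F" "F \<noteq> {}" "\<And>y. y \<in> F \<Longrightarrow> W y \<in> E"
  obtains v where "v \<in> E" "\<And>z. z \<in> X \<Longrightarrow> v z = Max ((\<lambda>y. W y z) ` F)"
  using assms
proof (induction F arbitrary: thesis rule: finite_ne_induct)
  case (insert y F)
  obtain v where v: "v \<in> E" "\<And>z. z \<in> X \<Longrightarrow> v z = Max ((\<lambda>y. W y z) ` F)"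
    using insert.IH insert.prems(2) by blast
  show ?case
  proof (rule insert.prems(1))
    show "djoin C (W y) v \<in> E" by (intro join_mem v(1) insert.prems(2)) simp
    show "djoin C (W y) v z = Max ((\<lambda>y. W y z) ` insert y F)" if "z \<in> X" for z
      using that insert.hyps(1,2) v mem_range[of "W y" z] mem_range[of v z] insert.prems(2)
      by (simp add: cont_dalg_join_apply)
  qed
qed auto

text \<open>Write \<open>u = w\<^sub>0 + P - N\<close> with \<open>P\<close>, \<open>N\<close> the sums of the positive and negative parts of
  the increments \<open>w\<^sub>n\<^sub>+\<^sub>1 - w\<^sub>n\<close>; each is a single \<open>\<delta>\<close> of \<open>2\<^sup>n\<^sup>+\<^sup>1\<close>-fold multiples. Since
  \<open>w\<^sub>0 + P\<close> may exceed \<open>1\<close>, the computation is done with halves: \<open>u = q \<oplus> q\<close>.\<close>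

lemma mem_of_fast_approximation:
  assumes u: "u \<in> dcar C" and w: "\<And>n. w n \<in> E"
    and close: "\<And>n z. z \<in> X \<Longrightarrow> \<bar>w n z - u z\<bar> < (1/2) ^ (n + 2)"
  shows "u \<in> E"
proof -
  define incr where "incr n = dominus C (w (Suc n)) (w n)" for n
  define decr where "decr n = dominus C (w n) (w (Suc n))" for n
  define P where "P = ddelta C (\<lambda>n. dmultiple C (2 ^ Suc n) (incr n))"
  define N where "N = ddelta C (\<lambda>n. dmultiple C (2 ^ Suc n) (decr n))"
  define q where "q = dominus C (dplus C (dhalf C (w 0)) (dhalf C P)) (dhalf C N)"
  have P: "P \<in> E" and N: "N \<in> E"
    unfolding P_def N_def incr_def decr_def by (intro delta_mem multiple_mem ominus_mem w)+
  have "dplus C q q = u"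
  proof (rule ext_split[where X=X])
    fix z assume z: "z \<in> X"
    have step: "\<bar>w (Suc n) z - w n z\<bar> \<le> (1/2) ^ Suc n" for n
    proof -
      have "(1/2::real) ^ (Suc n + 2) + (1/2) ^ (n + 2) \<le> (1/2) ^ Suc n"
        by (simp add: power_add)
      then show ?thesis
        using close[OF z, of n] close[OF z, of "Suc n"] by linarith
    qed
    have bounds: "0 \<le> incr n z" "incr n z \<le> (1/2) ^ Suc n" "0 \<le> decr n z" "decr n z \<le> (1/2) ^ Suc n" for n
      using step[of n] z by (auto simp: incr_def decr_def cont_dalg_apply max_def abs_le_iff)
    have "(\<lambda>n. incr n z) sums P z" "(\<lambda>n. decr n z) sums N z"
      unfolding P_def N_def using z bounds by (blast intro: dmultiple_dyadic_sums)+
    moreover have "(\<lambda>n. w n z) \<longlonglongrightarrow> u z"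
    proof (rule Lim_null[THEN iffD2, OF Lim_null_comparison])
      show "\<forall>\<^sub>F n in sequentially. norm (w n z - u z) \<le> (1/2) ^ (n + 2)"
        using close[OF z] by (intro always_eventually allI) (simp add: less_imp_le)
    qed (rule LIMSEQ_ignore_initial_segment[OF LIMSEQ_power_zero]; simp)
    ultimately have "u z = w 0 z + P z - N z"
      using z by (intro limit_eq_sums_increments) (simp_all add: incr_def decr_def cont_dalg_apply)
    then show "dplus C q q z = u z"
      using z mem_range[OF w z, of 0] mem_range[OF P z] mem_range[OF N z] cont_dalg_range[OF u z]
      by (simp add: q_def cont_dalg_apply)
  qed (simp add: cont_dalg_apply_outside cont_dalg_carrierD(4)[OF u])
  moreover have "q \<in> E"
    unfolding q_def using P N w by (intro ominus_mem plus_mem half_mem)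
  ultimately show ?thesis
    using plus_mem by metis
qed

end

lemma compact_finite_subcover_less:
  fixes g :: "'x::topological_space \<Rightarrow> 'x \<Rightarrow> real"
  assumes "compact X" "\<And>y. y \<in> X \<Longrightarrow> continuous_on X (g y)" "\<And>y. y \<in> X \<Longrightarrow> g y y < e"
  obtains F where "F \<subseteq> X" "finite F" "\<And>z. z \<in> X \<Longrightarrow> \<exists>y\<in>F. g y z < e"
proof -
  have "\<forall>y\<in>X. \<exists>U. open U \<and> U \<inter> X = g y -` {..<e} \<inter> X"
  proof
    fix y assume "y \<in> X"
    then show "\<exists>U. open U \<and> U \<inter> X = g y -` {..<e} \<inter> X"
      using assms(2) continuous_on_open_invariant open_lessThan by metis
  qed
  then obtain U where U: "\<forall>y\<in>X. open (U y) \<and> U y \<inter> X = g y -` {..<e} \<inter> X"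
    by (rule bchoice[THEN exE])
  have cover: "X \<subseteq> (\<Union>y\<in>X. U y)"
    using U assms(3) by blast
  obtain F where F: "F \<subseteq> X" "finite F" "X \<subseteq> (\<Union>y\<in>F. U y)"
    by (rule compactE_image[OF assms(1) _ cover]) (use U in auto)
  show ?thesis
  proof (rule that[OF F(1,2)])
    fix z assume z: "z \<in> X"
    then obtain y where "y \<in> F" "z \<in> U y"
      using F(3) by blast
    then show "\<exists>y\<in>F. g y z < e"
      using U F(1) z by blast
  qed
qed

locale separating_subalgebra = cont_subalgebra +
  assumes compact: "compact X"
    and separating: "x \<in> X \<Longrightarrow> y \<in> X \<Longrightarrow> x \<noteq> y \<Longrightarrow> \<exists>t\<in>E. t x \<noteq> t y"
begin

lemma separating_less:
  assumes "x \<in> X" "y \<in> X" "x \<noteq> y"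
  obtains t where "t \<in> E" "t x < t y"
proof -
  obtain t where t: "t \<in> E" "t x \<noteq> t y"
    using separating[OF assms] by blast
  show ?thesis
  proof (cases "t x < t y")
    case False
    with t assms show ?thesis
      using that[of "dneg C t"] by (simp add: neg_mem cont_dalg_apply)
  qed (use t that in blast)
qed

lemma interpolate:
  assumes x: "x \<in> X" and y: "y \<in> X" and "x \<noteq> y"
    and \<alpha>: "0 \<le> \<alpha>" "\<alpha> \<le> 1" and \<beta>: "0 \<le> \<beta>" "\<beta> \<le> 1"
  obtains w where "w \<in> E" "w x = \<alpha>" "w y = \<beta>"
proof -
  obtain t where t: "t \<in> E" "t x < t y"
    using separating_less[OF x y \<open>x \<noteq> y\<close>] by blast
  obtain c where c: "c \<in> E" "\<And>z. z \<in> X \<Longrightarrow> c z = t x"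
    by (rule const_mem[of "t x"]) (use mem_range[OF t(1) x] in auto)
  obtain N :: nat where N: "1 / (t y - t x) < real N"
    using reals_Archimedean2 by blast
  define z where "z = dmultiple C N (dominus C t c)"
  have "z \<in> E"
    unfolding z_def by (intro multiple_mem ominus_mem t c)
  moreover have "z x = 0"
    using x c(2)[OF x] by (simp add: z_def dmultiple_apply cont_dalg_apply)
  moreover have "z y = 1"
  proof -
    have "1 \<le> real N * (t y - t x)"
      using N t(2) by (simp add: field_simps)
    then show ?thesis
      using y c(2)[OF y] t(2) by (simp add: z_def dmultiple_apply cont_dalg_apply)
  qed
  ultimately show ?thesis
    using that[of "dplus C (dscale C \<beta> z) (dscale C \<alpha> (dneg C z))"] x y \<alpha> \<beta>
    by (simp add: plus_mem scale_mem neg_mem cont_dalg_apply dscale_apply)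
qed

lemma interpolate_carrier:
  assumes x: "x \<in> X" and y: "y \<in> X" and u: "u \<in> dcar C"
  obtains w where "w \<in> E" "w x = u x" "w y = u y"
proof (cases "x = y")
  case True
  obtain c where "c \<in> E" "\<And>z. z \<in> X \<Longrightarrow> c z = u x"
    by (rule const_mem[of "u x"]) (use cont_dalg_range[OF u x] in auto)
  then show ?thesis
    using that[of c] x y True by simp
next
  case False
  then show ?thesis
    using interpolate[OF x y] cont_dalg_range[OF u x] cont_dalg_range[OF u y] that by blast
qed

lemma upper_approx_exact_at:
  assumes u: "u \<in> dcar C" and "0 < e" and x: "x \<in> X"
  obtains v where "v \<in> E" "\<And>z. z \<in> X \<Longrightarrow> v z < u z + e" "v x = u x"
proof -
  have "\<forall>y\<in>X. \<exists>w. w \<in> E \<and> w x = u x \<and> w y = u y"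
    using interpolate_carrier[OF x _ u] by blast
  then obtain W where W: "\<And>y. y \<in> X \<Longrightarrow> W y \<in> E \<and> W y x = u x \<and> W y y = u y"
    by (metis bchoice)
  obtain F where F: "F \<subseteq> X" "finite F" "\<And>z. z \<in> X \<Longrightarrow> \<exists>y\<in>F. W y z - u z < e"
  proof (rule compact_finite_subcover_less[OF compact])
    show "continuous_on X (\<lambda>z. W y z - u z)" if "y \<in> X" for y
      using W[OF that] u subset_carrier by (intro continuous_intros cont_dalg_carrierD(1)) auto
  qed (use W \<open>0 < e\<close> in auto)
  have "F \<noteq> {}"
    using F(3) x by blast
  then obtain v where v: "v \<in> E" "\<And>z. z \<in> X \<Longrightarrow> v z = Min ((\<lambda>y. W y z) ` F)"
    by (rule Min_mem[OF F(2)]) (use W F(1) in blast)+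
  show ?thesis
  proof (rule that[OF v(1)])
    fix z assume z: "z \<in> X"
    then obtain y where "y \<in> F" "W y z - u z < e"
      using F(3) by blast
    moreover have "v z \<le> W y z"
      using \<open>y \<in> F\<close> v(2)[OF z] F(2) by simp
    ultimately show "v z < u z + e"
      by linarith
  next
    have "v x \<in> (\<lambda>y. W y x) ` F"
      using v(2)[OF x] F(2) \<open>F \<noteq> {}\<close> by simp
    then show "v x = u x"
      using W F(1) by auto
  qed
qed

lemma approx_uniform:
  assumes u: "u \<in> dcar C" and "0 < e"
  obtains w where "w \<in> E" "\<And>z. z \<in> X \<Longrightarrow> \<bar>w z - u z\<bar> < e"
proof (cases "X = {}")
  case True
  then show ?thesis using that zero_mem by blast
next
  case False
  have "\<forall>x\<in>X. \<exists>v. v \<in> E \<and> (\<forall>z\<in>X. v z < u z + e) \<and> v x = u x"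
    using upper_approx_exact_at[OF u \<open>0 < e\<close>] by metis
  then obtain V where V: "\<And>x. x \<in> X \<Longrightarrow> V x \<in> E \<and> (\<forall>z\<in>X. V x z < u z + e) \<and> V x x = u x"
    by (metis bchoice)
  obtain G where G: "G \<subseteq> X" "finite G" "\<And>z. z \<in> X \<Longrightarrow> \<exists>x\<in>G. u z - V x z < e"
  proof (rule compact_finite_subcover_less[OF compact])
    show "continuous_on X (\<lambda>z. u z - V x z)" if "x \<in> X" for x
      using V[OF that] u subset_carrier by (intro continuous_intros cont_dalg_carrierD(1)) auto
  qed (use V \<open>0 < e\<close> in auto)
  have "G \<noteq> {}"
    using G(3) False by blast
  then obtain w where w: "w \<in> E" "\<And>z. z \<in> X \<Longrightarrow> w z = Max ((\<lambda>x. V x z) ` G)"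
    by (rule Max_mem[OF G(2)]) (use V G(1) in blast)+
  show ?thesis
  proof (rule that[OF w(1)])
    fix z assume z: "z \<in> X"
    obtain x where "x \<in> G" "u z - V x z < e"
      using G(3)[OF z] by blast
    moreover have "V x z \<le> w z"
      using \<open>x \<in> G\<close> w(2)[OF z] G(2) by simp
    ultimately have "u z - e < w z"
      by linarith
    moreover have "w z \<in> (\<lambda>x. V x z) ` G"
      using w(2)[OF z] G(2) \<open>G \<noteq> {}\<close> by simp
    then have "w z < u z + e"
      using V G(1) z by auto
    ultimately show "\<bar>w z - u z\<bar> < e" by linarith
  qed
qed

theorem eq_carrier: "E = dcar C"
proof
  show "dcar C \<subseteq> E"
  proof
    fix u assume u: "u \<in> dcar C"
    have "\<forall>n. \<exists>w. w \<in> E \<and> (\<forall>z\<in>X. \<bar>w z - u z\<bar> < (1/2) ^ (n + 2))"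
      using approx_uniform[OF u] by (metis zero_less_power zero_less_divide_1_iff zero_less_numeral)
    then obtain w where "\<forall>n. w n \<in> E \<and> (\<forall>z\<in>X. \<bar>w n z - u z\<bar> < (1/2) ^ (n + 2))"
      by (rule choice[THEN exE])
    then show "u \<in> E"
      using mem_of_fast_approximation[OF u, of w] by blast
  qed
qed (rule subset_carrier)

end

lemma equalizer_subalgebra:
  assumes f: "delta_hom (cont_dalg X) B f" and g: "delta_hom (cont_dalg X) B g"
  shows "cont_subalgebra X {u \<in> dcar (cont_dalg X). f u = g u}"
proof
  show "dzero (cont_dalg X) \<in> {u \<in> dcar (cont_dalg X). f u = g u}"
    using f g cont_dalg_zero_closed by (simp add: delta_hom_def)
  show "dplus (cont_dalg X) a b \<in> {u \<in> dcar (cont_dalg X). f u = g u}"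
    if "a \<in> {u \<in> dcar (cont_dalg X). f u = g u}" "b \<in> {u \<in> dcar (cont_dalg X). f u = g u}" for a b
    using that f g cont_dalg_plus_closed[of a X b] by (simp add: delta_hom_def)
  show "dneg (cont_dalg X) a \<in> {u \<in> dcar (cont_dalg X). f u = g u}"
    if "a \<in> {u \<in> dcar (cont_dalg X). f u = g u}" for a
    using that f g cont_dalg_neg_closed[of a X] by (simp add: delta_hom_def)
  show "ddelta (cont_dalg X) gs \<in> {u \<in> dcar (cont_dalg X). f u = g u}"
    if "\<And>i. gs i \<in> {u \<in> dcar (cont_dalg X). f u = g u}" for gs
  proof -
    have gs: "\<forall>i. gs i \<in> dcar (cont_dalg X)" "(\<lambda>i. f (gs i)) = (\<lambda>i. g (gs i))"
      using that by auto
    have "f (ddelta (cont_dalg X) gs) = ddelta B (\<lambda>i. f (gs i))"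
      using f gs(1) unfolding delta_hom_def by blast
    also have "\<dots> = g (ddelta (cont_dalg X) gs)"
      using g gs unfolding delta_hom_def by metis
    finally show ?thesis
      using cont_dalg_delta_closed[of gs X] gs(1) by blast
  qed
qed auto

theorem mainTheorem8:
  fixes A :: "'a dalg"
  assumes "delta_algebra A"
  shows "delta_algebra (cont_dalg (MaxSpec A)) \<and>
         delta_hom A (cont_dalg (MaxSpec A)) (eta A) \<and>
         (\<forall>(B :: 'b dalg) f g. delta_algebra B \<longrightarrow>
            delta_hom (cont_dalg (MaxSpec A)) B f \<longrightarrow>
            delta_hom (cont_dalg (MaxSpec A)) B g \<longrightarrow>
            (\<forall>a\<in>dcar A. f (eta A a) = g (eta A a)) \<longrightarrow>
            (\<forall>u\<in>dcar (cont_dalg (MaxSpec A)). f u = g u))"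
proof (intro conjI allI impI)
  interpret delta_alg A by (rule delta_alg.intro[OF assms])
  show "delta_algebra (cont_dalg (MaxSpec A))" by (rule delta_algebra_cont_dalg)
  show "delta_hom A (cont_dalg (MaxSpec A)) (eta A)" by (rule eta_delta_hom)
  fix B :: "'b dalg" and f g
  assume f: "delta_hom (cont_dalg (MaxSpec A)) B f" and g: "delta_hom (cont_dalg (MaxSpec A)) B g"
    and agree: "\<forall>a\<in>dcar A. f (eta A a) = g (eta A a)"
  define E where "E = {u \<in> dcar (cont_dalg (MaxSpec A)). f u = g u}"
  interpret cont_subalgebra "MaxSpec A" E
    unfolding E_def using f g by (rule equalizer_subalgebra)
  interpret separating_subalgebra "MaxSpec A" E
  proof
    show "compact (MaxSpec A)" by (rule compact_MaxSpec)
    fix h h' assume "h \<in> MaxSpec A" "h' \<in> MaxSpec A" "h \<noteq> h'"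
    then obtain a where "a \<in> dcar A" "eta A a h \<noteq> eta A a h'"
      using eta_separates by blast
    then show "\<exists>t\<in>E. t h \<noteq> t h'"
      using eta_closed agree unfolding E_def by (intro bexI[of _ "eta A a"]) simp_all
  qed
  show "\<forall>u\<in>dcar (cont_dalg (MaxSpec A)). f u = g u"
  proof
    fix u assume "u \<in> dcar (cont_dalg (MaxSpec A))"
    then show "f u = g u"
      using eq_carrier[unfolded E_def set_eq_iff, rule_format, of u] by simp
  qed
qed

end
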